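(* Fix an integer $k \geq 2$. For an integer $m \geq 1$ and a probability distribution $p=(p_1,\dots,p_m)$ on $\{1,\dots,m\}$, throw balls one at a time independently into $m$ bins, each landing in bin $i$ with probability $p_i$, let $T_k$ be the number of balls thrown until some bin first contains $k$ balls, and let $\|p\|_k = \left(\sum_{i=1}^m p_i^k\right)^{1/k}$. Then: (1) for all $m$ and $p$, $\|p\|_k\,\mathbb{E}\,T_k \geq c_k$, where $c_k = \int_0^\infty e^{-t^k/k!}\,dt = (k!)^{1/k}\,\Gamma(1+\tfrac{1}{k})$, and $c_k$ is the best possible such lower bound, i.e. $\inf_{m,p} \|p\|_k\,\mathbb{E}\,T_k = c_k$; (2) for all $m$ and $p$, $\|p\|_k\,\mathbb{E}\,T_k \leq k$, and $k$ is the best possible such upper bound, i.e. $\sup_{m,p} \|p\|_k\,\mathbb{E}\,T_k = k$.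
   Context: $\Gamma$ denotes the Gamma function. *)

theory Defs
  imports "HOL-Probability.Probability"
begin

text \<open>Balls are an i.i.d. stream with law p (a pmf on bins, supported in {1..m}).
  The ball with index j (0-based) lands in bin omega !! j.\<close>

definition hit_time :: "nat \<Rightarrow> nat stream \<Rightarrow> nat" where
  "hit_time k \<omega> = (LEAST n. \<exists>i. card {j. j < n \<and> \<omega> !! j = i} \<ge> k)"

definition expected_hit_time :: "nat \<Rightarrow> nat pmf \<Rightarrow> real" where
  "expected_hit_time k p =
     (\<integral>\<omega>. real (hit_time k \<omega>) \<partial>(stream_space (measure_pmf p)))"

definition lp_norm :: "nat \<Rightarrow> nat \<Rightarrow> nat pmf \<Rightarrow> real" where
  "lp_norm k m p = (\<Sum>i = 1..m. pmf p i ^ k) powr (1 / real k)"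

definition admissible_values :: "nat \<Rightarrow> real set" where
  "admissible_values k =
     {lp_norm k m p * expected_hit_time k p | m p. m \<ge> 1 \<and> set_pmf p \<subseteq> {1..m}}"

end

theory Submission
  imports Defs "HOL-Computational_Algebra.Polynomial"
begin

text \<open>
  Let Q_k(x) = e^(-x) (1 + x + ... + x^(k-1)/(k-1)!) be the probability that a Poisson variable
  of mean x is less than k. Throwing the balls at the jump times of a unit-rate Poisson process
  makes the bins fill independently, bin i holding fewer than k balls at time t with probability
  Q_k(p_i t); hence E T_k = \<integral>_0^\<infinity> \<Prod>_i Q_k(p_i t) dt. Here this identity is derived by
  first-step analysis instead: on polynomials the functional L(P) = \<integral>_0^\<infinity> e^(-t) P(t) dt
  satisfies L(P) = P(0) + L(P'), which is the recursion for the expected remaining time from a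
  vector of bin counts.

  With w_i = p_i / ||p||_k, so that \<Sum>_i w_i^k = 1, rescaling time gives
  ||p||_k E T_k = \<integral>_0^\<infinity> \<Prod>_i Q_k(w_i u) du. Since e^(-x^k/k!) \<le> Q_k(x) and ln Q_k(x) / x^k
  is nondecreasing, so that Q_k(w x) \<le> Q_k(x)^(w^k) for 0 \<le> w \<le> 1, the integrand lies between
  e^(-u^k/k!) and Q_k(u), whose integrals are c_k and k. A single bin attains k, and for m
  equally likely bins the integrand Q_k(m^(-1/k) u)^m tends to e^(-u^k/k!), so by dominated
  convergence the infimum is c_k.
\<close>

section \<open>Truncated exponential series and Poisson probabilities\<close>

definition trunc_exp :: "nat \<Rightarrow> real \<Rightarrow> real" where
  "trunc_exp n x = (\<Sum>j<n. x ^ j / fact j)"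

definition poisson_lt :: "nat \<Rightarrow> real \<Rightarrow> real" where
  "poisson_lt n x = exp (- x) * trunc_exp n x"

lemma trunc_exp_Suc: "trunc_exp (Suc n) x = trunc_exp n x + x ^ n / fact n"
  by (simp add: trunc_exp_def)

lemma trunc_exp_0 [simp]: "trunc_exp 0 x = 0"
  by (simp add: trunc_exp_def)

lemma trunc_exp_Suc_at_0 [simp]: "trunc_exp (Suc n) 0 = 1"
  by (induction n) (auto simp: trunc_exp_Suc)

lemma trunc_exp_nonneg: "x \<ge> 0 \<Longrightarrow> trunc_exp n x \<ge> 0"
  unfolding trunc_exp_def by (intro sum_nonneg) auto

lemma one_le_trunc_exp:
  assumes "n \<ge> 1" "x \<ge> 0"
  shows "1 \<le> trunc_exp n x"
proof -
  obtain r where n: "n = Suc r" using assms by (cases n) auto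
  have "trunc_exp n x = 1 + (\<Sum>j<r. x ^ Suc j / fact (Suc j))"
    unfolding trunc_exp_def n by (subst sum.lessThan_Suc_shift) simp
  moreover have "(\<Sum>j<r. x ^ Suc j / fact (Suc j)) \<ge> 0"
    using assms by (intro sum_nonneg) auto
  ultimately show ?thesis by simp
qed

lemma isCont_trunc_exp: "isCont (trunc_exp n) x"
  unfolding trunc_exp_def by (intro continuous_intros) auto

lemma has_real_derivative_pow_div_fact:
  "((\<lambda>x. x ^ Suc n / fact (Suc n)) has_real_derivative x ^ n / fact n) (at x)"
proof -
  have "((\<lambda>x. x ^ Suc n / fact (Suc n)) has_real_derivative real (Suc n) * x ^ n / fact (Suc n))
          (at x)"
    using DERIV_cdivide[OF DERIV_pow[of "Suc n" x], of "fact (Suc n)"] by simp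
  moreover have "real (Suc n) * x ^ n / fact (Suc n) = x ^ n / fact n"
    by (simp add: fact_Suc del: of_nat_Suc)
  ultimately show ?thesis by simp
qed

lemma has_real_derivative_trunc_exp:
  "(trunc_exp (Suc n) has_real_derivative trunc_exp n x) (at x)"
proof (induction n)
  case 0
  show ?case by (simp add: trunc_exp_def)
next
  case (Suc n)
  have "trunc_exp (Suc (Suc n)) = (\<lambda>x. trunc_exp (Suc n) x + x ^ Suc n / fact (Suc n))"
    by (rule ext) (simp only: trunc_exp_Suc[of "Suc n"])
  then show ?case
    using DERIV_add[OF Suc.IH has_real_derivative_pow_div_fact] by (simp add: trunc_exp_Suc)
qed

lemma has_real_derivative_ln_trunc_exp:
  assumes "x \<ge> 0"
  shows "((\<lambda>t. ln (trunc_exp (Suc n) t)) has_real_derivative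
           trunc_exp n x / trunc_exp (Suc n) x) (at x)"
proof -
  have "trunc_exp (Suc n) x > 0"
    using one_le_trunc_exp[of "Suc n" x] assms by simp
  from DERIV_chain2[OF DERIV_ln_divide[OF this] has_real_derivative_trunc_exp] show ?thesis
    by simp
qed

lemma poisson_lt_pos: "n \<ge> 1 \<Longrightarrow> x \<ge> 0 \<Longrightarrow> poisson_lt n x > 0"
  using one_le_trunc_exp[of n x] by (simp add: poisson_lt_def)

lemma poisson_lt_at_0: "n \<ge> 1 \<Longrightarrow> poisson_lt n 0 = 1"
  by (cases n) (simp_all add: poisson_lt_def)

lemma ln_poisson_lt: "n \<ge> 1 \<Longrightarrow> x \<ge> 0 \<Longrightarrow> ln (poisson_lt n x) = ln (trunc_exp n x) - x"
  using one_le_trunc_exp[of n x] by (simp add: poisson_lt_def ln_mult)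

lemma isCont_poisson_lt: "isCont (poisson_lt n) x"
  unfolding poisson_lt_def by (intro continuous_intros isCont_trunc_exp)

lemma exp_neg_pow_div_fact_le_poisson_lt:
  assumes "n \<ge> 1" "x \<ge> 0"
  shows "exp (- (x ^ n) / fact n) \<le> poisson_lt n x"
proof -
  obtain r where n: "n = Suc r" using assms by (cases n) auto
  let ?f = "\<lambda>t. ln (trunc_exp n t) - t + t ^ n / fact n"
  have "?f 0 \<le> ?f x"
  proof (rule DERIV_nonneg_imp_nondecreasing[OF assms(2)])
    fix t assume t: "0 \<le> t" "t \<le> x"
    have E: "trunc_exp r t = trunc_exp n t - t ^ r / fact r"
      by (simp add: n trunc_exp_Suc)
    have E1: "trunc_exp n t \<ge> 1" using one_le_trunc_exp t assms by simp
    have D: "(?f has_real_derivative trunc_exp r t / trunc_exp n t - 1 + t ^ r / fact r) (at t)"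
      unfolding n
      by (intro DERIV_add DERIV_diff has_real_derivative_ln_trunc_exp
            has_real_derivative_pow_div_fact DERIV_ident) (use t in auto)
    have "trunc_exp r t / trunc_exp n t - 1 + t ^ r / fact r
          = t ^ r / fact r * (trunc_exp n t - 1) / trunc_exp n t"
      unfolding E using E1 by (simp add: field_simps)
    also have "\<dots> \<ge> 0" using E1 t by simp
    finally show "\<exists>y. (?f has_real_derivative y) (at t) \<and> 0 \<le> y" using D by blast
  qed
  then have "- (x ^ n) / fact n \<le> ln (poisson_lt n x)"
    using assms ln_poisson_lt by (simp add: n)
  then show ?thesis
    using poisson_lt_pos[OF assms] by (metis exp_le_cancel_iff exp_ln)
qed

lemma ln_poisson_lt_le:
  assumes "n \<ge> 1" "x \<ge> 0"
  shows "ln (poisson_lt n x) \<le> - (x ^ n / (fact n * trunc_exp n x))"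
proof -
  obtain r where n: "n = Suc r" using assms by (cases n) auto
  let ?g = "\<lambda>t. t - ln (trunc_exp n t) - t ^ n / fact n / trunc_exp n t"
  have "?g 0 \<le> ?g x"
  proof (rule DERIV_nonneg_imp_nondecreasing[OF assms(2)])
    fix t assume t: "0 \<le> t" "t \<le> x"
    have E: "trunc_exp r t = trunc_exp n t - t ^ r / fact r"
      by (simp add: n trunc_exp_Suc)
    have E1: "trunc_exp n t \<ge> 1" using one_le_trunc_exp t assms by simp
    have D: "(?g has_real_derivative 1 - trunc_exp r t / trunc_exp n t -
       (t ^ r / fact r * trunc_exp n t - t ^ n / fact n * trunc_exp r t) /
       (trunc_exp n t * trunc_exp n t)) (at t)"
      unfolding n
      by (intro DERIV_add DERIV_diff has_real_derivative_ln_trunc_exp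
            has_real_derivative_pow_div_fact DERIV_ident DERIV_divide has_real_derivative_trunc_exp)
        (use t E1 n in auto)
    have "1 - trunc_exp r t / trunc_exp n t -
       (t ^ r / fact r * trunc_exp n t - t ^ n / fact n * trunc_exp r t) /
       (trunc_exp n t * trunc_exp n t)
       = t ^ n / fact n * trunc_exp r t / (trunc_exp n t * trunc_exp n t)"
      unfolding E using E1 by (simp add: field_simps)
    also have "\<dots> \<ge> 0" using t trunc_exp_nonneg by simp
    finally show "\<exists>y. (?g has_real_derivative y) (at t) \<and> 0 \<le> y" using D by blast
  qed
  then show ?thesis
    using assms ln_poisson_lt by (simp add: n)
qed

lemma poisson_lt_le_exp:
  assumes "n \<ge> 1" "x \<ge> 0"
  shows "poisson_lt n x \<le> exp (- (x ^ n) / (fact n * trunc_exp n x))"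
  using ln_poisson_lt_le[OF assms] poisson_lt_pos[OF assms]
  by (metis exp_le_cancel_iff exp_ln minus_divide_left)

lemma has_real_derivative_ln_trunc_exp_minus_div_pow:
  assumes n: "n = Suc r" and "t > 0"
  shows "((\<lambda>t. (ln (trunc_exp n t) - t) / t ^ n) has_real_derivative
           real n * t ^ r * (t - ln (trunc_exp n t) - t ^ n / (fact n * trunc_exp n t)) / (t ^ n * t ^ n))
         (at t)"
proof -
  have E: "trunc_exp r t = trunc_exp n t - t ^ r / fact r"
    by (simp add: n trunc_exp_Suc)
  have "trunc_exp n t \<ge> 1"
    using one_le_trunc_exp \<open>t > 0\<close> by (simp add: n)
  have "((\<lambda>t. (ln (trunc_exp n t) - t) / t ^ n) has_real_derivative
        ((trunc_exp r t / trunc_exp n t - 1) * t ^ n - (ln (trunc_exp n t) - t) * (real n * t ^ r))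
        / (t ^ n * t ^ n)) (at t)"
    unfolding n
    using DERIV_divide[OF DERIV_diff[OF has_real_derivative_ln_trunc_exp[of t r] DERIV_ident]
        DERIV_pow[of "Suc r" t]] \<open>t > 0\<close>
    by simp
  moreover have "t ^ n = t * t ^ r" "fact n = real n * fact r" "real n > 0"
    by (simp_all add: n fact_Suc)
  then have "(trunc_exp r t / trunc_exp n t - 1) * t ^ n - (ln (trunc_exp n t) - t) * (real n * t ^ r)
      = real n * t ^ r * (t - ln (trunc_exp n t) - t ^ n / (fact n * trunc_exp n t))"
    unfolding E using \<open>trunc_exp n t \<ge> 1\<close> by (simp add: field_simps)
  ultimately show ?thesis by simp
qed

lemma ln_poisson_lt_div_pow_mono:
  assumes "n \<ge> 1" "0 < y" "y \<le> x"
  shows "ln (poisson_lt n y) / y ^ n \<le> ln (poisson_lt n x) / x ^ n"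
proof -
  obtain r where n: "n = Suc r" using assms by (cases n) auto
  have "(ln (trunc_exp n y) - y) / y ^ n \<le> (ln (trunc_exp n x) - x) / x ^ n"
  proof (rule DERIV_nonneg_imp_nondecreasing[OF assms(3)])
    fix t assume "y \<le> t" "t \<le> x"
    then have "t > 0" using assms by auto
    then have "real n * t ^ r * (t - ln (trunc_exp n t) - t ^ n / (fact n * trunc_exp n t)) / (t ^ n * t ^ n) \<ge> 0"
      using ln_poisson_lt_le[of n t] ln_poisson_lt[of n t] assms by simp
    then show "\<exists>d. ((\<lambda>t. (ln (trunc_exp n t) - t) / t ^ n) has_real_derivative d) (at t) \<and> 0 \<le> d"
      using has_real_derivative_ln_trunc_exp_minus_div_pow[OF n \<open>t > 0\<close>] by blast
  qed
  then show ?thesis using assms ln_poisson_lt by simp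
qed

lemma poisson_lt_mult_le_powr:
  assumes "n \<ge> 1" "0 \<le> w" "w \<le> 1" "u \<ge> 0"
  shows "poisson_lt n (w * u) \<le> poisson_lt n u powr (w ^ n)"
proof (cases "w = 0 \<or> u = 0")
  case True
  then show ?thesis
    using poisson_lt_at_0[OF assms(1)] poisson_lt_pos[OF assms(1,4)] assms
    by (auto simp: power_0_left)
next
  case False
  then have "w > 0" "u > 0" using assms by auto
  have "ln (poisson_lt n (w * u)) / (w * u) ^ n \<le> ln (poisson_lt n u) / u ^ n"
    using ln_poisson_lt_div_pow_mono assms \<open>w > 0\<close> \<open>u > 0\<close> by (simp add: mult_le_cancel_right1)
  then have "ln (poisson_lt n (w * u)) \<le> w ^ n * ln (poisson_lt n u)"
    using \<open>w > 0\<close> \<open>u > 0\<close> by (simp add: divide_le_eq power_mult_distrib field_simps)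
  also have "\<dots> = ln (poisson_lt n u powr (w ^ n))"
    using poisson_lt_pos assms by (simp add: ln_powr)
  finally have "ln (poisson_lt n (w * u)) \<le> ln (poisson_lt n u powr (w ^ n))" .
  moreover have "poisson_lt n (w * u) > 0" "poisson_lt n u > 0"
    using poisson_lt_pos assms \<open>w > 0\<close> by simp_all
  ultimately show ?thesis
    by (subst (asm) ln_le_cancel_iff) auto
qed

section \<open>The functional L on polynomials\<close>

definition poly_exp_integral :: "real poly \<Rightarrow> real" where
  "poly_exp_integral P = (\<Sum>i\<le>degree P. coeff P i * fact i)"

lemma poly_exp_integral_eq:
  assumes "degree P \<le> N"
  shows "poly_exp_integral P = (\<Sum>i\<le>N. coeff P i * fact i)"
  unfolding poly_exp_integral_def
  by (rule sum.mono_neutral_left) (use assms in \<open>auto simp: coeff_eq_0\<close>)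

lemma poly_exp_integral_0 [simp]: "poly_exp_integral 0 = 0"
  by (simp add: poly_exp_integral_def)

lemma poly_exp_integral_nonneg: "(\<And>i. coeff P i \<ge> 0) \<Longrightarrow> poly_exp_integral P \<ge> 0"
  unfolding poly_exp_integral_def by (intro sum_nonneg) auto

lemma poly_exp_integral_add: "poly_exp_integral (P + Q) = poly_exp_integral P + poly_exp_integral Q"
proof -
  let ?N = "max (degree P) (degree Q)"
  have "poly_exp_integral (P + Q) = (\<Sum>i\<le>?N. coeff (P + Q) i * fact i)"
    by (rule poly_exp_integral_eq) (simp add: degree_add_le)
  also have "\<dots> = (\<Sum>i\<le>?N. coeff P i * fact i) + (\<Sum>i\<le>?N. coeff Q i * fact i)"
    by (simp add: sum.distrib distrib_right)
  also have "\<dots> = poly_exp_integral P + poly_exp_integral Q"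
    by (simp add: poly_exp_integral_eq[symmetric])
  finally show ?thesis .
qed

lemma poly_exp_integral_smult: "poly_exp_integral (smult a P) = a * poly_exp_integral P"
proof -
  have "poly_exp_integral (smult a P) = (\<Sum>i\<le>degree P. coeff (smult a P) i * fact i)"
    by (rule poly_exp_integral_eq) (simp add: degree_smult_le)
  then show ?thesis
    by (simp add: poly_exp_integral_def sum_distrib_left mult.assoc)
qed

lemma poly_exp_integral_sum:
  "poly_exp_integral (\<Sum>i\<in>A. f i) = (\<Sum>i\<in>A. poly_exp_integral (f i))"
  by (induction A rule: infinite_finite_induct) (auto simp: poly_exp_integral_add)

lemma poly_exp_integral_pderiv:
  "poly_exp_integral P = poly P 0 + poly_exp_integral (pderiv P)"
proof -
  let ?D = "degree P"
  have "poly_exp_integral (pderiv P) = (\<Sum>i\<le>?D. coeff (pderiv P) i * fact i)"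
    by (rule poly_exp_integral_eq) (simp add: degree_pderiv)
  also have "\<dots> = (\<Sum>i\<le>?D. coeff P (Suc i) * fact (Suc i))"
    by (rule sum.cong) (auto simp: coeff_pderiv fact_Suc)
  finally have "poly_exp_integral (pderiv P) = (\<Sum>i\<le>?D. coeff P (Suc i) * fact (Suc i))" .
  moreover have "poly_exp_integral P = (\<Sum>i\<le>Suc ?D. coeff P i * fact i)"
    by (rule poly_exp_integral_eq) simp
  moreover have "\<dots> = coeff P 0 + (\<Sum>i\<le>?D. coeff P (Suc i) * fact (Suc i))"
    by (subst sum.atMost_Suc_shift) simp
  ultimately show ?thesis
    by (simp add: poly_0_coeff_0)
qed

definition trunc_exp_poly :: "nat \<Rightarrow> real \<Rightarrow> real poly" where
  "trunc_exp_poly n a = (\<Sum>j<n. monom (a ^ j / fact j) j)"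

lemma poly_trunc_exp_poly: "poly (trunc_exp_poly n a) t = trunc_exp n (a * t)"
  by (simp add: trunc_exp_poly_def trunc_exp_def poly_sum poly_monom power_mult_distrib)

lemma coeff_trunc_exp_poly: "coeff (trunc_exp_poly n a) i = (if i < n then a ^ i / fact i else 0)"
  by (simp add: trunc_exp_poly_def coeff_sum coeff_monom)

lemma trunc_exp_poly_0 [simp]: "trunc_exp_poly 0 a = 0"
  by (simp add: trunc_exp_poly_def)

lemma pderiv_trunc_exp_poly: "pderiv (trunc_exp_poly (Suc n) a) = smult a (trunc_exp_poly n a)"
  by (rule poly_eqI) (simp add: coeff_pderiv coeff_trunc_exp_poly fact_Suc field_simps del: of_nat_Suc)

lemma poly_exp_integral_trunc_exp_poly_1: "poly_exp_integral (trunc_exp_poly n 1) = n"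
proof -
  have "poly_exp_integral (trunc_exp_poly n 1) = (\<Sum>i\<le>n. coeff (trunc_exp_poly n 1) i * fact i)"
    by (intro poly_exp_integral_eq degree_le) (simp add: coeff_trunc_exp_poly)
  also have "\<dots> = (\<Sum>i<n. 1)"
    by (rule sum.mono_neutral_cong_right) (auto simp: coeff_trunc_exp_poly)
  finally show ?thesis by simp
qed

lemma coeff_prod_nonneg:
  fixes f :: "'a \<Rightarrow> real poly"
  shows "(\<And>i j. i \<in> A \<Longrightarrow> coeff (f i) j \<ge> 0) \<Longrightarrow> coeff (\<Prod>i\<in>A. f i) j \<ge> 0"
proof (induction A arbitrary: j rule: infinite_finite_induct)
  case (insert x F)
  then show ?case
    by (auto simp: coeff_mult intro!: sum_nonneg mult_nonneg_nonneg)
qed (auto simp: coeff_1)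

definition state_poly :: "nat \<Rightarrow> nat set \<Rightarrow> (nat \<Rightarrow> real) \<Rightarrow> (nat \<Rightarrow> nat) \<Rightarrow> real poly" where
  "state_poly k A q c = (\<Prod>i\<in>A. trunc_exp_poly (k - c i) (q i))"

lemma state_poly_eq_0:
  assumes "finite A" "i \<in> A" "k \<le> c i"
  shows "state_poly k A q c = 0"
proof -
  have "trunc_exp_poly (k - c i) (q i) = 0" using assms by simp
  then show ?thesis
    unfolding state_poly_def using assms(1,2) by (metis prod_zero)
qed

lemma coeff_state_poly_nonneg:
  "(\<And>i. i \<in> A \<Longrightarrow> q i \<ge> 0) \<Longrightarrow> coeff (state_poly k A q c) j \<ge> 0"
  unfolding state_poly_def by (rule coeff_prod_nonneg) (simp add: coeff_trunc_exp_poly)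

lemma poly_state_poly_at_0:
  assumes "\<And>i. i \<in> A \<Longrightarrow> c i < k"
  shows "poly (state_poly k A q c) 0 = 1"
proof -
  have "trunc_exp (k - c i) 0 = 1" if "i \<in> A" for i
    using assms[OF that] by (cases "k - c i") auto
  then show ?thesis
    by (simp add: state_poly_def poly_prod poly_trunc_exp_poly)
qed

lemma pderiv_state_poly:
  assumes A: "finite A" and c: "\<And>i. i \<in> A \<Longrightarrow> c i < k"
  shows "pderiv (state_poly k A q c) = (\<Sum>i\<in>A. smult (q i) (state_poly k A q (c(i := Suc (c i)))))"
  unfolding state_poly_def pderiv_prod
proof (rule sum.cong[OF refl])
  fix i assume i: "i \<in> A"
  then have ki: "k - c i = Suc (k - Suc (c i))" using c by fastforce
  have "(\<Prod>j\<in>A. trunc_exp_poly (k - (c(i := Suc (c i))) j) (q j))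
      = trunc_exp_poly (k - Suc (c i)) (q i) *
        (\<Prod>j\<in>A - {i}. trunc_exp_poly (k - (c(i := Suc (c i))) j) (q j))"
    by (subst prod.remove[OF A i]) simp
  also have "(\<Prod>j\<in>A - {i}. trunc_exp_poly (k - (c(i := Suc (c i))) j) (q j))
      = (\<Prod>j\<in>A - {i}. trunc_exp_poly (k - c j) (q j))"
    by (rule prod.cong) auto
  finally show "(\<Prod>j\<in>A - {i}. trunc_exp_poly (k - c j) (q j)) * pderiv (trunc_exp_poly (k - c i) (q i))
      = smult (q i) (\<Prod>j\<in>A. trunc_exp_poly (k - (c(i := Suc (c i))) j) (q j))"
    by (simp add: ki pderiv_trunc_exp_poly mult.commute)
qed

lemma poly_exp_integral_state_poly:
  assumes "finite A" "\<And>i. i \<in> A \<Longrightarrow> c i < k"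
  shows "poly_exp_integral (state_poly k A q c) =
           1 + (\<Sum>i\<in>A. q i * poly_exp_integral (state_poly k A q (c(i := Suc (c i)))))"
  using poly_exp_integral_pderiv[of "state_poly k A q c"]
  by (simp add: assms poly_state_poly_at_0 pderiv_state_poly poly_exp_integral_sum
      poly_exp_integral_smult)

section \<open>Expected hitting time by first-step analysis\<close>

definition bin_count :: "nat stream \<Rightarrow> nat \<Rightarrow> nat \<Rightarrow> nat" where
  "bin_count \<omega> n i = card {j. j < n \<and> \<omega> !! j = i}"

definition hit_time_from :: "nat \<Rightarrow> (nat \<Rightarrow> nat) \<Rightarrow> nat stream \<Rightarrow> nat" where
  "hit_time_from k c \<omega> = (LEAST n. \<exists>i. k \<le> c i + bin_count \<omega> n i)"

lemma hit_time_eq_hit_time_from: "hit_time k \<omega> = hit_time_from k (\<lambda>_. 0) \<omega>"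
  by (simp add: hit_time_def hit_time_from_def bin_count_def)

lemma bin_count_Cons:
  "bin_count (x ## \<omega>) (Suc n) i = (if x = i then Suc (bin_count \<omega> n i) else bin_count \<omega> n i)"
proof -
  have "{j. j < Suc n \<and> (x ## \<omega>) !! j = i} =
      (if x = i then {0} else {}) \<union> Suc ` {j. j < n \<and> \<omega> !! j = i}"
    by (auto simp: image_iff split: nat.splits) (auto simp: less_Suc_eq_0_disj)
  moreover have "0 \<notin> Suc ` {j. j < n \<and> \<omega> !! j = i}" by auto
  ultimately show ?thesis
    unfolding bin_count_def by (auto simp: card_image)
qed

lemma hit_time_from_eq_0: "k \<le> c i \<Longrightarrow> hit_time_from k c \<omega> = 0"
  unfolding hit_time_from_def by (rule Least_eq_0) (auto simp: bin_count_def)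

lemma hit_time_from_Cons:
  assumes c: "\<And>i. c i < k" and ex: "\<exists>n i. k \<le> c i + bin_count (x ## \<omega>) n i"
  shows "hit_time_from k c (x ## \<omega>) = Suc (hit_time_from k (c(x := Suc (c x))) \<omega>)"
proof -
  obtain n i where "k \<le> c i + bin_count (x ## \<omega>) n i" using ex by auto
  moreover have "\<not> (\<exists>i. k \<le> c i + bin_count (x ## \<omega>) 0 i)"
    using c by (auto simp: bin_count_def not_le)
  ultimately have "(LEAST n. \<exists>i. k \<le> c i + bin_count (x ## \<omega>) n i) =
      Suc (LEAST m. \<exists>i. k \<le> c i + bin_count (x ## \<omega>) (Suc m) i)"
    by (intro Least_Suc) auto
  moreover have "(\<exists>i. k \<le> c i + bin_count (x ## \<omega>) (Suc m) i) \<longleftrightarrow>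
      (\<exists>i. k \<le> (c(x := Suc (c x))) i + bin_count \<omega> m i)" for m
    by (auto simp: bin_count_Cons split: if_splits)
  ultimately show ?thesis
    unfolding hit_time_from_def by simp
qed

lemma hit_time_from_exists:
  assumes B: "finite B" "B \<noteq> {}" and \<omega>: "\<And>j. \<omega> !! j \<in> B"
  shows "\<exists>n i. k \<le> c i + bin_count \<omega> n i"
proof (rule ccontr)
  assume "\<not> ?thesis"
  then have less: "\<And>n i. bin_count \<omega> n i < k"
    by (meson le_add2 not_le order_trans)
  let ?n = "card B * k"
  have "(\<Sum>i\<in>B. bin_count \<omega> ?n i) = card (\<Union>i\<in>B. {j. j < ?n \<and> \<omega> !! j = i})"
    unfolding bin_count_def by (rule card_UN_disjoint[symmetric]) (use B in auto)
  also have "(\<Union>i\<in>B. {j. j < ?n \<and> \<omega> !! j = i}) = {..<?n}"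
    using \<omega> by auto
  finally have "(\<Sum>i\<in>B. bin_count \<omega> ?n i) = ?n" by simp
  moreover have "(\<Sum>i\<in>B. bin_count \<omega> ?n i) < (\<Sum>i\<in>B. k)"
    by (rule sum_strict_mono) (use B less in auto)
  ultimately show False by simp
qed

lemma measurable_hit_time_from [measurable]:
  "hit_time_from k c \<in> measurable (stream_space (measure_pmf p)) (count_space UNIV)"
proof -
  have "(\<lambda>\<omega>. \<exists>i. k \<le> c i + bin_count \<omega> n i) \<in> measurable (stream_space (measure_pmf p)) (count_space UNIV)"
    for n
  proof -
    let ?\<Phi> = "\<lambda>xs::nat list. \<exists>i. k \<le> c i + card {j. j < n \<and> xs ! j = i}"
    have "(\<lambda>\<omega>. \<exists>i. k \<le> c i + bin_count \<omega> n i) = (\<lambda>\<omega>. ?\<Phi> (stake n \<omega>))"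
      by (rule ext) (simp add: bin_count_def cong: conj_cong)
    moreover have "(\<lambda>\<omega>. ?\<Phi> (stake n \<omega>)) \<in> measurable (stream_space (count_space UNIV)) (count_space UNIV)"
      by (rule measurable_compose[OF measurable_stake]) simp
    moreover have "sets (stream_space (measure_pmf p)) = sets (stream_space (count_space UNIV))"
      by (rule sets_stream_space_cong) simp
    ultimately show ?thesis
      using measurable_cong_sets by metis
  qed
  then show ?thesis
    unfolding hit_time_from_def by (rule measurable_Least)
qed

lemma AE_snth_in_set_pmf: "AE \<omega> in stream_space (measure_pmf p). \<forall>j. \<omega> !! j \<in> set_pmf p"
proof -
  have "AE \<omega> in stream_space (measure_pmf p). stream_all (\<lambda>x. x \<in> set_pmf p) \<omega>"
    by (rule prob_space.AE_stream_all[OF prob_space_measure_pmf]) (auto simp: AE_measure_pmf)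
  then show ?thesis
    by (rule AE_mp) (auto simp: sset_range intro!: AE_I2)
qed

lemma nn_integral_hit_time_from_Cons:
  assumes "finite (set_pmf p)" "x \<in> set_pmf p" and c: "\<And>i. c i < k"
  shows "(\<integral>\<^sup>+\<omega>. real (hit_time_from k c (x ## \<omega>)) \<partial>stream_space (measure_pmf p)) =
         1 + (\<integral>\<^sup>+\<omega>. real (hit_time_from k (c(x := Suc (c x))) \<omega>) \<partial>stream_space (measure_pmf p))"
proof -
  let ?S = "stream_space (measure_pmf p)"
  interpret S: prob_space ?S
    by (rule prob_space.prob_space_stream_space[OF prob_space_measure_pmf])
  have "AE \<omega> in ?S. ennreal (real (hit_time_from k c (x ## \<omega>))) =
                    1 + ennreal (real (hit_time_from k (c(x := Suc (c x))) \<omega>))"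
    using AE_snth_in_set_pmf[of p]
  proof (rule AE_mp, intro AE_I2 impI)
    fix \<omega> assume "\<forall>j. \<omega> !! j \<in> set_pmf p"
    then have "\<exists>n i. k \<le> c i + bin_count (x ## \<omega>) n i"
      using assms
      by (intro hit_time_from_exists[of "set_pmf p"])
        (auto simp: set_pmf_not_empty Stream_snth split: nat.splits)
    then show "ennreal (real (hit_time_from k c (x ## \<omega>))) =
               1 + ennreal (real (hit_time_from k (c(x := Suc (c x))) \<omega>))"
      by (simp add: hit_time_from_Cons[OF c] ennreal_plus add.commute)
  qed
  then have "(\<integral>\<^sup>+\<omega>. real (hit_time_from k c (x ## \<omega>)) \<partial>?S) =
             (\<integral>\<^sup>+\<omega>. 1 + ennreal (real (hit_time_from k (c(x := Suc (c x))) \<omega>)) \<partial>?S)"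
    by (rule nn_integral_cong_AE)
  also have "\<dots> = 1 + (\<integral>\<^sup>+\<omega>. real (hit_time_from k (c(x := Suc (c x))) \<omega>) \<partial>?S)"
    by (subst nn_integral_add) (auto simp: S.emeasure_space_1)
  finally show ?thesis .
qed

lemma nn_integral_hit_time_from_rec:
  assumes fin: "finite (set_pmf p)" and c: "\<And>i. c i < k"
  shows "(\<integral>\<^sup>+\<omega>. real (hit_time_from k c \<omega>) \<partial>stream_space (measure_pmf p)) =
         1 + (\<Sum>x\<in>set_pmf p. ennreal (pmf p x) *
              (\<integral>\<^sup>+\<omega>. real (hit_time_from k (c(x := Suc (c x))) \<omega>) \<partial>stream_space (measure_pmf p)))"
proof -
  let ?S = "stream_space (measure_pmf p)"
  let ?N = "\<lambda>x. (\<integral>\<^sup>+\<omega>. real (hit_time_from k (c(x := Suc (c x))) \<omega>) \<partial>?S)"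
  have "(\<integral>\<^sup>+\<omega>. real (hit_time_from k c \<omega>) \<partial>?S) =
        (\<integral>\<^sup>+x. (\<integral>\<^sup>+\<omega>. real (hit_time_from k c (x ## \<omega>)) \<partial>?S) \<partial>measure_pmf p)"
    by (rule prob_space.nn_integral_stream_space[OF prob_space_measure_pmf]) simp
  also have "\<dots> = (\<Sum>x\<in>set_pmf p. (1 + ?N x) * pmf p x)"
    using assms
    by (subst nn_integral_measure_pmf_finite[OF fin])
      (auto simp: nn_integral_hit_time_from_Cons intro!: sum.cong)
  also have "\<dots> = (\<Sum>x\<in>set_pmf p. ennreal (pmf p x) + ennreal (pmf p x) * ?N x)"
    by (rule sum.cong) (auto simp: distrib_right distrib_left mult.commute)
  also have "\<dots> = (\<Sum>x\<in>set_pmf p. ennreal (pmf p x)) + (\<Sum>x\<in>set_pmf p. ennreal (pmf p x) * ?N x)"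
    by (rule sum.distrib)
  also have "(\<Sum>x\<in>set_pmf p. ennreal (pmf p x)) = 1"
    using sum_pmf_eq_1[OF fin subset_refl] by (simp add: sum_ennreal)
  finally show ?thesis .
qed

lemma nn_integral_hit_time_from:
  assumes A: "finite A" "set_pmf p \<subseteq> A" and "k \<ge> 1" and "\<And>i. i \<notin> A \<Longrightarrow> c i = 0"
  shows "(\<integral>\<^sup>+\<omega>. real (hit_time_from k c \<omega>) \<partial>stream_space (measure_pmf p)) =
           poly_exp_integral (state_poly k A (pmf p) c)"
  using assms(4)
proof (induction c rule: measure_induct_rule[where f = "\<lambda>c. \<Sum>i\<in>A. k - c i"])
  case (less c)
  let ?L = "\<lambda>x. poly_exp_integral (state_poly k A (pmf p) (c(x := Suc (c x))))"
  show ?case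
  proof (cases "\<exists>i\<in>A. k \<le> c i")
    case True
    then show ?thesis
      using state_poly_eq_0[OF A(1)] hit_time_from_eq_0 by fastforce
  next
    case False
    then have cA: "\<And>i. i \<in> A \<Longrightarrow> c i < k" by auto
    have c: "c i < k" for i
      using cA less.prems \<open>k \<ge> 1\<close> by (cases "i \<in> A") auto
    have L_nonneg: "?L x \<ge> 0" for x
      by (intro poly_exp_integral_nonneg coeff_state_poly_nonneg) simp
    have IH: "(\<integral>\<^sup>+\<omega>. real (hit_time_from k (c(x := Suc (c x))) \<omega>) \<partial>stream_space (measure_pmf p))
              = ?L x" if "x \<in> set_pmf p" for x
    proof (rule less.IH)
      have "x \<in> A" using A that by auto
      then show "(\<Sum>i\<in>A. k - (c(x := Suc (c x))) i) < (\<Sum>i\<in>A. k - c i)"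
        using cA[OF \<open>x \<in> A\<close>] by (intro sum_strict_mono_ex1[OF A(1)]) auto
      show "\<And>i. i \<notin> A \<Longrightarrow> (c(x := Suc (c x))) i = 0"
        using less.prems \<open>x \<in> A\<close> by auto
    qed
    have "(\<integral>\<^sup>+\<omega>. real (hit_time_from k c \<omega>) \<partial>stream_space (measure_pmf p)) =
          1 + (\<Sum>x\<in>set_pmf p. ennreal (pmf p x * ?L x))"
      using A c finite_subset
      by (subst nn_integral_hit_time_from_rec) (auto simp: IH ennreal_mult L_nonneg intro!: sum.cong)
    also have "\<dots> = 1 + (\<Sum>x\<in>A. pmf p x * ?L x)"
      using L_nonneg A
      by (simp add: ennreal_plus sum_ennreal sum_nonneg set_pmf_iff
          sum.mono_neutral_left[OF A(1) A(2)])
    also have "\<dots> = poly_exp_integral (state_poly k A (pmf p) c)"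
      using poly_exp_integral_state_poly[OF A(1) cA] by simp
    finally show ?thesis .
  qed
qed

lemma expected_hit_time_eq_poly_exp_integral:
  assumes "finite A" "set_pmf p \<subseteq> A" "k \<ge> 1"
  shows "expected_hit_time k p = poly_exp_integral (state_poly k A (pmf p) (\<lambda>_. 0))"
proof -
  have "expected_hit_time k p =
        enn2real (\<integral>\<^sup>+\<omega>. real (hit_time_from k (\<lambda>_. 0) \<omega>) \<partial>stream_space (measure_pmf p))"
    unfolding expected_hit_time_def hit_time_eq_hit_time_from
    by (rule integral_eq_nn_integral) auto
  also have "\<dots> = poly_exp_integral (state_poly k A (pmf p) (\<lambda>_. 0))"
    using assms poly_exp_integral_nonneg[OF coeff_state_poly_nonneg]
    by (simp add: nn_integral_hit_time_from)
  finally show ?thesis .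
qed

lemma expected_hit_time_nonneg: "finite (set_pmf p) \<Longrightarrow> k \<ge> 1 \<Longrightarrow> expected_hit_time k p \<ge> 0"
  using expected_hit_time_eq_poly_exp_integral[OF _ subset_refl]
    poly_exp_integral_nonneg[OF coeff_state_poly_nonneg]
  by simp

section \<open>Integrals over the half-line and Poissonization\<close>

definition halfline_integral :: "(real \<Rightarrow> real) \<Rightarrow> ennreal" where
  "halfline_integral f = (\<integral>\<^sup>+t\<in>{0..}. ennreal (f t) \<partial>lborel)"

lemma halfline_integral_mono:
  "(\<And>t. t \<ge> 0 \<Longrightarrow> f t \<le> g t) \<Longrightarrow> halfline_integral f \<le> halfline_integral g"
  unfolding halfline_integral_def by (intro nn_integral_mono) (auto simp: indicator_def ennreal_leI)

lemma halfline_integral_cong: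
  "(\<And>t. t > 0 \<Longrightarrow> f t = g t) \<Longrightarrow> halfline_integral f = halfline_integral g"
  unfolding halfline_integral_def
  by (rule nn_integral_cong_AE, rule AE_mp[OF AE_lborel_singleton[of 0]])
    (auto simp: indicator_def intro!: AE_I2)

lemma halfline_integral_cmult:
  assumes [measurable]: "f \<in> borel_measurable borel" and "a \<ge> 0"
  shows "halfline_integral (\<lambda>t. a * f t) = a * halfline_integral f"
  unfolding halfline_integral_def using assms
  by (subst nn_integral_cmult[symmetric])
    (auto simp: ennreal_mult' mult.assoc intro!: nn_integral_cong)

lemma halfline_integral_rescale:
  assumes [measurable]: "f \<in> borel_measurable borel" and "s > 0"
  shows "halfline_integral (\<lambda>u. f (u / s)) = s * halfline_integral f"
proof -
  have "halfline_integral f =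
        ennreal \<bar>1 / s\<bar> * (\<integral>\<^sup>+u. ennreal (f (0 + 1 / s * u)) * indicator {0..} (0 + 1 / s * u) \<partial>lborel)"
    unfolding halfline_integral_def
    by (rule nn_integral_real_affine[where c = "1 / s" and t = 0,
          of "\<lambda>t. ennreal (f t) * indicator {0..} t"]) (use \<open>s > 0\<close> in auto)
  also have "(\<integral>\<^sup>+u. ennreal (f (0 + 1 / s * u)) * indicator {0..} (0 + 1 / s * u) \<partial>lborel) =
             halfline_integral (\<lambda>u. f (u / s))"
    unfolding halfline_integral_def using \<open>s > 0\<close>
    by (intro nn_integral_cong) (auto simp: indicator_def zero_le_divide_iff)
  finally have "halfline_integral f = ennreal (1 / s) * halfline_integral (\<lambda>u. f (u / s))"
    using \<open>s > 0\<close> by simp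
  then have "ennreal s * halfline_integral f =
                (ennreal s * ennreal (1 / s)) * halfline_integral (\<lambda>u. f (u / s))"
    by (simp add: mult.assoc)
  also have "ennreal s * ennreal (1 / s) = 1"
    using \<open>s > 0\<close> by (simp add: ennreal_mult[symmetric])
  finally show ?thesis by simp
qed

lemma tendsto_halfline_integral:
  assumes [measurable]: "f \<in> borel_measurable borel" and f_nonneg: "\<And>x. x \<ge> 0 \<Longrightarrow> f x \<ge> 0"
    and "incseq b" and b: "filterlim b at_top sequentially"
  shows "(\<lambda>n. \<integral>\<^sup>+x. ennreal (f x * indicator {0..b n} x) \<partial>lborel) \<longlonglongrightarrow> halfline_integral f"
  unfolding halfline_integral_def
proof (rule nn_integral_LIMSEQ)
  show "incseq (\<lambda>n x. ennreal (f x * indicator {0..b n} x))"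
  proof (intro incseq_SucI le_funI ennreal_leI)
    fix n x
    show "f x * indicator {0..b n} x \<le> f x * indicator {0..b (Suc n)} x"
      using incseq_SucD[OF \<open>incseq b\<close>, of n] f_nonneg[of x] by (auto simp: indicator_def)
  qed
  fix x
  show "(\<lambda>n. ennreal (f x * indicator {0..b n} x)) \<longlonglongrightarrow> ennreal (f x) * indicator {0..} x"
  proof (cases "x \<ge> 0")
    case True
    have "eventually (\<lambda>n. x \<le> b n) sequentially"
      using b by (simp add: filterlim_at_top)
    then show ?thesis
      by (rule tendsto_eventually[OF eventually_mono]) (use True in auto)
  qed simp
qed simp

lemma measurable_poisson_lt [measurable]: "poisson_lt n \<in> borel_measurable borel"
  by (intro borel_measurable_continuous_onI continuous_at_imp_continuous_on ballI isCont_poisson_lt)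

lemma halfline_integral_exp_poly:
  assumes P: "\<And>i. coeff P i \<ge> 0"
  shows "halfline_integral (\<lambda>t. exp (- t) * poly P t) = poly_exp_integral P"
proof -
  let ?D = "degree P"
  have eq: "ennreal (exp (- t) * poly P t) * indicator {0..} t =
      (\<Sum>i\<le>?D. ennreal (coeff P i) * (ennreal (t ^ i * exp (- t)) * indicator {0..} t))" for t
  proof (cases "t \<ge> 0")
    case True
    have "exp (- t) * poly P t = (\<Sum>i\<le>?D. coeff P i * (t ^ i * exp (- t)))"
      by (simp add: poly_altdef sum_distrib_left mult_ac)
    then show ?thesis
      using P True by (simp add: sum_ennreal[symmetric] ennreal_mult)
  qed simp
  have "halfline_integral (\<lambda>t. exp (- t) * poly P t) =
      (\<Sum>i\<le>?D. ennreal (coeff P i) * (\<integral>\<^sup>+t. ennreal (t ^ i * exp (- t)) * indicator {0..} t \<partial>lborel))"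
    unfolding halfline_integral_def eq
    by (subst nn_integral_sum) (auto simp: nn_integral_cmult)
  also have "\<dots> = (\<Sum>i\<le>?D. ennreal (coeff P i * fact i))"
    using P by (simp add: nn_intergal_power_times_exp_Ici ennreal_mult)
  also have "\<dots> = poly_exp_integral P"
    using P unfolding poly_exp_integral_def by (intro sum_ennreal) simp
  finally show ?thesis .
qed

lemma halfline_integral_poisson_lt: "halfline_integral (poisson_lt k) = ennreal (real k)"
proof -
  have "halfline_integral (poisson_lt k) = halfline_integral (\<lambda>t. exp (- t) * poly (trunc_exp_poly k 1) t)"
    by (rule halfline_integral_cong) (simp add: poisson_lt_def poly_trunc_exp_poly)
  also have "\<dots> = poly_exp_integral (trunc_exp_poly k 1)"
    by (rule halfline_integral_exp_poly) (simp add: coeff_trunc_exp_poly)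
  finally show ?thesis
    by (simp add: poly_exp_integral_trunc_exp_poly_1)
qed

lemma prod_poisson_lt_eq_state_poly:
  assumes "finite A" "sum q A = 1"
  shows "(\<Prod>i\<in>A. poisson_lt k (q i * t)) = exp (- t) * poly (state_poly k A q (\<lambda>_. 0)) t"
proof -
  have "(\<Prod>i\<in>A. exp (- (q i * t))) = exp (- t)"
    using exp_sum[OF assms(1), of "\<lambda>i. - (q i * t)"] assms(2)
    by (simp add: sum_negf sum_distrib_right[symmetric])
  then show ?thesis
    by (simp add: poisson_lt_def prod.distrib state_poly_def poly_prod poly_trunc_exp_poly)
qed

theorem expected_hit_time_eq_halfline_integral:
  assumes "finite A" "set_pmf p \<subseteq> A" "k \<ge> 1"
  shows "expected_hit_time k p = halfline_integral (\<lambda>t. \<Prod>i\<in>A. poisson_lt k (pmf p i * t))"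
proof -
  have "sum (pmf p) A = 1"
    using sum_pmf_eq_1 assms by blast
  then have "halfline_integral (\<lambda>t. \<Prod>i\<in>A. poisson_lt k (pmf p i * t)) =
             halfline_integral (\<lambda>t. exp (- t) * poly (state_poly k A (pmf p) (\<lambda>_. 0)) t)"
    using assms by (simp add: prod_poisson_lt_eq_state_poly)
  also have "\<dots> = poly_exp_integral (state_poly k A (pmf p) (\<lambda>_. 0))"
    by (intro halfline_integral_exp_poly coeff_state_poly_nonneg) simp
  finally show ?thesis
    using expected_hit_time_eq_poly_exp_integral[OF assms] by simp
qed

section \<open>The constant c_k\<close>

lemma halfline_integral_substitution:
  fixes f g g' :: "real \<Rightarrow> real"
  assumes [measurable]: "f \<in> borel_measurable borel" and f_nonneg: "\<And>x. x \<ge> 0 \<Longrightarrow> f x \<ge> 0"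
    and "g 0 = 0" and g: "\<And>x. (g has_real_derivative g' x) (at x)"
    and "continuous_on UNIV g'" and g'_nonneg: "\<And>x. x \<ge> 0 \<Longrightarrow> g' x \<ge> 0"
    and g_at_top: "filterlim g at_top at_top"
  shows "halfline_integral f = halfline_integral (\<lambda>x. f (g x) * g' x)"
proof -
  have g_mono: "g x \<le> g y" if "0 \<le> x" "x \<le> y" for x y
    using g g'_nonneg that by (intro DERIV_nonneg_imp_nondecreasing[OF that(2)]) force
  have "continuous_on UNIV g"
    using g DERIV_isCont by (blast intro: continuous_at_imp_continuous_on)
  then have [measurable]: "g \<in> borel_measurable borel" "g' \<in> borel_measurable borel"
    using \<open>continuous_on UNIV g'\<close> by (simp_all add: borel_measurable_continuous_onI)
  have "(\<lambda>n. \<integral>\<^sup>+x. ennreal (f x * indicator {0..g (real n)} x) \<partial>lborel) \<longlonglongrightarrow> halfline_integral f"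
    using g_mono f_nonneg filterlim_compose[OF g_at_top filterlim_real_sequentially]
    by (intro tendsto_halfline_integral) (auto simp: incseq_def)
  moreover have "(\<lambda>n. \<integral>\<^sup>+x. ennreal (f (g x) * g' x * indicator {0..real n} x) \<partial>lborel)
                   \<longlonglongrightarrow> halfline_integral (\<lambda>x. f (g x) * g' x)"
    using f_nonneg g'_nonneg g_mono[of 0] \<open>g 0 = 0\<close> filterlim_real_sequentially
    by (intro tendsto_halfline_integral) (auto simp: incseq_def)
  moreover have "(\<integral>\<^sup>+x. ennreal (f x * indicator {g 0..g b} x) \<partial>lborel) =
                 (\<integral>\<^sup>+x. ennreal (f (g x) * g' x * indicator {0..b} x) \<partial>lborel)" if "b \<ge> 0" for b
    using g g'_nonneg that
    by (intro nn_integral_substitution) (auto simp: set_borel_measurable_def intro: continuous_on_subset[OF \<open>continuous_on UNIV g'\<close>])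
  ultimately show ?thesis
    using \<open>g 0 = 0\<close> LIMSEQ_unique by fastforce
qed

lemma halfline_integral_exp_neg_pow:
  assumes "k \<ge> 1"
  shows "halfline_integral (\<lambda>t. exp (- (t ^ k))) = Gamma (1 + 1 / real k)"
proof -
  define F where "F = (\<lambda>s::real. s powr (1 / real k - 1) * exp (- s))"
  have [measurable]: "F \<in> borel_measurable borel"
    unfolding F_def by measurable
  have "1 / real k \<notin> \<int>\<^sub>\<le>\<^sub>0"
    using assms by (auto dest: nonpos_Ints_nonpos)
  then have "ennreal (Gamma (1 + 1 / real k)) = ennreal (1 / real k) * ennreal (Gamma (1 / real k))"
    using Gamma_plus1[of "1 / real k"] by (simp add: add.commute ennreal_mult'[symmetric])
  also have "ennreal (Gamma (1 / real k)) = halfline_integral F"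
    using assms unfolding halfline_integral_def F_def
    by (subst Gamma_conv_nn_integral_real)
      (auto intro!: nn_integral_cong simp: indicator_def exp_minus divide_inverse)
  also have "ennreal (1 / real k) * halfline_integral F = halfline_integral (\<lambda>s. 1 / real k * F s)"
    by (rule halfline_integral_cmult[symmetric]) auto
  also have "\<dots> = halfline_integral (\<lambda>t. 1 / real k * F (t ^ k) * (real k * t ^ (k - 1)))"
    using assms
    by (intro halfline_integral_substitution DERIV_pow filterlim_pow_at_top filterlim_ident
        continuous_intros) (auto simp: F_def)
  also have "\<dots> = halfline_integral (\<lambda>t. exp (- (t ^ k)))"
  proof (rule halfline_integral_cong)
    fix t :: real assume "t > 0"
    have "(t ^ k) powr (1 / real k - 1) * t ^ (k - 1) = t powr (real k * (1 / real k - 1) + (real k - 1))"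
      using \<open>t > 0\<close> assms by (simp add: powr_realpow[symmetric] powr_powr powr_add of_nat_diff)
    also have "real k * (1 / real k - 1) + (real k - 1) = 0"
      using assms by (simp add: field_simps)
    finally show "1 / real k * F (t ^ k) * (real k * t ^ (k - 1)) = exp (- (t ^ k))"
      using \<open>t > 0\<close> assms by (simp add: F_def)
  qed
  finally show ?thesis ..
qed

lemma halfline_integral_exp_neg_pow_div_fact:
  assumes "k \<ge> 1"
  shows "halfline_integral (\<lambda>t. exp (- (t ^ k) / fact k)) =
           fact k powr (1 / real k) * Gamma (1 + 1 / real k)"
proof -
  define s :: real where "s = fact k powr (1 / real k)"
  have "s > 0" by (simp add: s_def)
  have "s ^ k = s powr real k"
    using \<open>s > 0\<close> by (simp add: powr_realpow)
  also have "\<dots> = fact k"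
    using assms by (simp add: s_def powr_powr)
  finally have "s ^ k = fact k" .
  then have "exp (- (t ^ k) / fact k) = exp (- ((t / s) ^ k))" for t
    by (simp add: power_divide)
  then have "halfline_integral (\<lambda>t. exp (- (t ^ k) / fact k)) =
             halfline_integral (\<lambda>t. (\<lambda>u. exp (- (u ^ k))) (t / s))"
    by simp
  also have "\<dots> = s * halfline_integral (\<lambda>u. exp (- (u ^ k)))"
    by (rule halfline_integral_rescale) (simp_all add: \<open>s > 0\<close>)
  also have "\<dots> = s * Gamma (1 + 1 / real k)"
    using \<open>s > 0\<close> assms by (simp add: halfline_integral_exp_neg_pow ennreal_mult')
  finally show ?thesis by (simp add: s_def)
qed

lemma has_integral_exp_neg_pow_div_fact:
  assumes "k \<ge> 1"
  shows "((\<lambda>t. exp (- (t ^ k) / fact k)) has_integral fact k powr (1 / real k) * Gamma (1 + 1 / real k))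
           {0..}"
proof -
  let ?c = "fact k powr (1 / real k) * Gamma (1 + 1 / real k)"
  have "(\<integral>\<^sup>+t. ennreal (indicator {0..} t * exp (- (t ^ k) / fact k)) \<partial>lborel) =
        halfline_integral (\<lambda>t. exp (- (t ^ k) / fact k))"
    unfolding halfline_integral_def by (intro nn_integral_cong) (auto simp: indicator_def)
  also have "\<dots> = ennreal ?c"
    by (rule halfline_integral_exp_neg_pow_div_fact[OF assms])
  finally have "(\<integral>\<^sup>+t. ennreal (indicator {0..} t * exp (- (t ^ k) / fact k)) \<partial>lborel) = ennreal ?c" .
  moreover have "?c \<ge> 0"
    by (intro mult_nonneg_nonneg less_imp_le Gamma_real_pos) (auto intro: add_pos_nonneg)
  ultimately have "((\<lambda>t. indicator {0..} t * exp (- (t ^ k) / fact k)) has_integral ?c) UNIV"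
    by (intro nn_integral_has_integral) auto
  also have "(\<lambda>t. indicator {0..} t * exp (- (t ^ k) / fact k)) =
             (\<lambda>t. if t \<in> {0..} then exp (- (t ^ k) / fact k) else 0)"
    by (auto simp: indicator_def)
  finally show ?thesis
    by (simp only: has_integral_restrict_UNIV)
qed

section \<open>The two bounds\<close>

lemma exp_neg_pow_div_fact_le_prod_poisson_lt:
  assumes "finite A" "\<And>i. i \<in> A \<Longrightarrow> w i \<ge> 0" "(\<Sum>i\<in>A. w i ^ k) = 1" "k \<ge> 1" "u \<ge> 0"
  shows "exp (- (u ^ k) / fact k) \<le> (\<Prod>i\<in>A. poisson_lt k (w i * u))"
proof -
  have "exp (- (u ^ k) / fact k) = exp (\<Sum>i\<in>A. - ((w i * u) ^ k) / fact k)"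
    using assms(3)
    by (simp add: power_mult_distrib sum_divide_distrib[symmetric] sum_negf
        sum_distrib_right[symmetric])
  also have "\<dots> = (\<Prod>i\<in>A. exp (- ((w i * u) ^ k) / fact k))"
    by (rule exp_sum[OF assms(1)])
  also have "\<dots> \<le> (\<Prod>i\<in>A. poisson_lt k (w i * u))"
    by (intro prod_mono conjI exp_neg_pow_div_fact_le_poisson_lt) (use assms in auto)
  finally show ?thesis .
qed

lemma prod_poisson_lt_le_poisson_lt:
  assumes "finite A" "\<And>i. i \<in> A \<Longrightarrow> w i \<ge> 0" "(\<Sum>i\<in>A. w i ^ k) = 1" "k \<ge> 1" "u \<ge> 0"
  shows "(\<Prod>i\<in>A. poisson_lt k (w i * u)) \<le> poisson_lt k u"
proof -
  have "w i \<le> 1" if "i \<in> A" for i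
  proof -
    have "w i ^ k \<le> (\<Sum>i\<in>A. w i ^ k)"
      using assms that by (intro member_le_sum) auto
    then show ?thesis
      using assms that by (simp add: power_le_one_iff)
  qed
  then have "(\<Prod>i\<in>A. poisson_lt k (w i * u)) \<le> (\<Prod>i\<in>A. poisson_lt k u powr (w i ^ k))"
    using assms poisson_lt_pos
    by (intro prod_mono) (auto intro: poisson_lt_mult_le_powr less_imp_le)
  also have "\<dots> = poisson_lt k u"
    using assms poisson_lt_pos[of k u] by (simp add: powr_sum[symmetric])
  finally show ?thesis .
qed

context
  fixes k m :: nat and p :: "nat pmf"
  assumes k: "k \<ge> 1" and p: "set_pmf p \<subseteq> {1..m}"
begin

lemma lp_norm_pos: "lp_norm k m p > 0"
proof -
  have "sum (pmf p) {1..m} = 1"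
    using sum_pmf_eq_1 p by blast
  then obtain i where "i \<in> {1..m}" "pmf p i > 0"
    by (metis sum.neutral less_eq_real_def pmf_nonneg zero_neq_one)
  then have "(\<Sum>i = 1..m. pmf p i ^ k) > 0"
    by (intro sum_pos2[of _ i]) auto
  then show ?thesis by (simp add: lp_norm_def)
qed

lemma sum_pow_div_lp_norm: "(\<Sum>i = 1..m. (pmf p i / lp_norm k m p) ^ k) = 1"
proof -
  have "lp_norm k m p ^ k = lp_norm k m p powr real k"
    using lp_norm_pos by (simp add: powr_realpow)
  also have "\<dots> = (\<Sum>i = 1..m. pmf p i ^ k)"
    using k by (simp add: lp_norm_def powr_powr sum_nonneg)
  finally have "(\<Sum>i = 1..m. (pmf p i / lp_norm k m p) ^ k) = lp_norm k m p ^ k / lp_norm k m p ^ k"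
    by (simp add: power_divide sum_divide_distrib[symmetric])
  then show ?thesis
    using lp_norm_pos by simp
qed

lemma lp_norm_mult_expected_hit_time:
  "lp_norm k m p * expected_hit_time k p =
     halfline_integral (\<lambda>u. \<Prod>i = 1..m. poisson_lt k (pmf p i / lp_norm k m p * u))"
proof -
  let ?s = "lp_norm k m p"
  have "halfline_integral (\<lambda>u. \<Prod>i = 1..m. poisson_lt k (pmf p i / ?s * u)) =
        halfline_integral (\<lambda>u. (\<lambda>t. \<Prod>i = 1..m. poisson_lt k (pmf p i * t)) (u / ?s))"
    by simp
  also have "\<dots> = ?s * halfline_integral (\<lambda>t. \<Prod>i = 1..m. poisson_lt k (pmf p i * t))"
    using lp_norm_pos by (intro halfline_integral_rescale) auto
  also have "\<dots> = ennreal ?s * ennreal (expected_hit_time k p)"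
    using expected_hit_time_eq_halfline_integral[of "{1..m}" p k] k p by simp
  finally show ?thesis
    using lp_norm_pos by (simp add: ennreal_mult')
qed

theorem lp_norm_mult_expected_hit_time_ge:
  "fact k powr (1 / real k) * Gamma (1 + 1 / real k) \<le> lp_norm k m p * expected_hit_time k p"
proof -
  have "ennreal (fact k powr (1 / real k) * Gamma (1 + 1 / real k)) =
        halfline_integral (\<lambda>u. exp (- (u ^ k) / fact k))"
    using halfline_integral_exp_neg_pow_div_fact[OF k] by simp
  also have "\<dots> \<le> halfline_integral (\<lambda>u. \<Prod>i = 1..m. poisson_lt k (pmf p i / lp_norm k m p * u))"
    using lp_norm_pos sum_pow_div_lp_norm k
    by (intro halfline_integral_mono exp_neg_pow_div_fact_le_prod_poisson_lt) auto
  also have "\<dots> = lp_norm k m p * expected_hit_time k p"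
    by (rule lp_norm_mult_expected_hit_time[symmetric])
  finally show ?thesis
    using lp_norm_pos expected_hit_time_nonneg[OF finite_subset[OF p] k] by simp
qed

theorem lp_norm_mult_expected_hit_time_le: "lp_norm k m p * expected_hit_time k p \<le> k"
proof -
  have "halfline_integral (\<lambda>u. \<Prod>i = 1..m. poisson_lt k (pmf p i / lp_norm k m p * u)) \<le>
        halfline_integral (poisson_lt k)"
    using lp_norm_pos sum_pow_div_lp_norm k
    by (intro halfline_integral_mono prod_poisson_lt_le_poisson_lt) auto
  then have "ennreal (lp_norm k m p * expected_hit_time k p) \<le> ennreal (real k)"
    by (simp only: lp_norm_mult_expected_hit_time halfline_integral_poisson_lt)
  then show ?thesis by simp
qed

end

section \<open>Extremal distributions\<close>

lemma lp_norm_mult_expected_hit_time_single_bin: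
  assumes "k \<ge> 1"
  shows "lp_norm k 1 (return_pmf 1) * expected_hit_time k (return_pmf 1) = k"
proof -
  have "expected_hit_time k (return_pmf 1) = halfline_integral (poisson_lt k)"
    using expected_hit_time_eq_halfline_integral[of "{1}" "return_pmf 1" k] assms by simp
  then have "expected_hit_time k (return_pmf 1) = k"
    using halfline_integral_poisson_lt expected_hit_time_nonneg[of "return_pmf 1" k] assms by simp
  then show ?thesis
    by (simp add: lp_norm_def)
qed

lemma lp_norm_mult_expected_hit_time_uniform:
  assumes "m \<ge> 1" "k \<ge> 1"
  shows "lp_norm k m (pmf_of_set {1..m}) * expected_hit_time k (pmf_of_set {1..m}) =
           halfline_integral (\<lambda>u. poisson_lt k (root k (1 / real m) * u) ^ m)"
proof -
  let ?p = "pmf_of_set {1..m}"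
  let ?s = "lp_norm k m ?p"
  have p: "set_pmf ?p \<subseteq> {1..m}" using assms by simp
  define w where "w = 1 / real m / ?s"
  have w: "pmf ?p i / ?s = w" if "i \<in> {1..m}" for i
    using that assms by (simp add: w_def)
  have "real m * w ^ k = 1"
    using sum_pow_div_lp_norm[OF assms(2) p] assms by (simp add: w_def)
  moreover have "w \<ge> 0"
    using lp_norm_pos[OF assms(2) p] by (simp add: w_def)
  ultimately have "root k (1 / real m) = w"
    using assms by (intro real_root_pos_unique) (auto simp: field_simps)
  moreover have "(\<lambda>u. \<Prod>i = 1..m. poisson_lt k (pmf ?p i / ?s * u)) = (\<lambda>u. poisson_lt k (w * u) ^ m)"
  proof
    fix u
    have "(\<Prod>i = 1..m. poisson_lt k (pmf ?p i / ?s * u)) = (\<Prod>i = 1..m. poisson_lt k (w * u))"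
      by (rule prod.cong[OF refl]) (simp only: w)
    then show "(\<Prod>i = 1..m. poisson_lt k (pmf ?p i / ?s * u)) = poisson_lt k (w * u) ^ m"
      by simp
  qed
  ultimately show ?thesis
    by (simp only: lp_norm_mult_expected_hit_time[OF assms(2) p])
qed

lemma tendsto_poisson_lt_uniform:
  assumes "k \<ge> 1" "u \<ge> 0"
  shows "(\<lambda>m. poisson_lt k (root k (1 / real m) * u) ^ m) \<longlonglongrightarrow> exp (- (u ^ k) / fact k)"
proof (rule tendsto_sandwich)
  define w where "w m = root k (1 / real m)" for m
  have "w \<longlonglongrightarrow> root k 0"
    unfolding w_def by (intro tendsto_intros lim_const_over_n)
  then have "(\<lambda>m. trunc_exp k (w m * u)) \<longlonglongrightarrow> trunc_exp k (0 * u)"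
    by (intro isCont_tendsto_compose[OF isCont_trunc_exp] tendsto_intros) simp
  then have "(\<lambda>m. exp (- (u ^ k) / (fact k * trunc_exp k (w m * u)))) \<longlonglongrightarrow> exp (- (u ^ k) / fact k)"
    using assms by (cases k) (auto intro!: tendsto_eq_intros)
  moreover have "eventually (\<lambda>m. exp (- (u ^ k) / fact k) \<le> poisson_lt k (w m * u) ^ m \<and>
                   poisson_lt k (w m * u) ^ m \<le> exp (- (u ^ k) / (fact k * trunc_exp k (w m * u))))
                 sequentially"
  proof (rule eventually_sequentiallyI[of 1])
    fix m :: nat assume "m \<ge> 1"
    have sum: "(\<Sum>i = 1..m. w m ^ k) = 1" and "w m * u \<ge> 0"
      using \<open>m \<ge> 1\<close> assms by (simp_all add: w_def)
    have "poisson_lt k (w m * u) ^ m \<le> exp (- ((w m * u) ^ k) / (fact k * trunc_exp k (w m * u))) ^ m"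
      using assms \<open>w m * u \<ge> 0\<close> poisson_lt_pos
      by (intro power_mono poisson_lt_le_exp) (auto intro: less_imp_le)
    also have "\<dots> = exp (- (u ^ k) / (fact k * trunc_exp k (w m * u)))"
      using sum by (simp add: exp_of_nat_mult[symmetric] power_mult_distrib field_simps)
    finally show "exp (- (u ^ k) / fact k) \<le> poisson_lt k (w m * u) ^ m \<and>
                  poisson_lt k (w m * u) ^ m \<le> exp (- (u ^ k) / (fact k * trunc_exp k (w m * u)))"
      using exp_neg_pow_div_fact_le_prod_poisson_lt[of "{1..m}" "\<lambda>_. w m" k u] sum assms
      by (simp add: w_def)
  qed
  ultimately show "eventually (\<lambda>m. exp (- (u ^ k) / fact k) \<le> poisson_lt k (root k (1 / real m) * u) ^ m) sequentially"
      "eventually (\<lambda>m. poisson_lt k (root k (1 / real m) * u) ^ m \<le> exp (- (u ^ k) / (fact k * trunc_exp k (w m * u)))) sequentially"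
      "(\<lambda>m. exp (- (u ^ k) / (fact k * trunc_exp k (w m * u)))) \<longlonglongrightarrow> exp (- (u ^ k) / fact k)"
    by (auto simp: w_def elim: eventually_mono)
qed simp

lemma tendsto_halfline_integral_poisson_lt_uniform:
  assumes "k \<ge> 1"
  shows "(\<lambda>m. halfline_integral (\<lambda>u. poisson_lt k (root k (1 / real m) * u) ^ m))
           \<longlonglongrightarrow> halfline_integral (\<lambda>u. exp (- (u ^ k) / fact k))"
proof (rule filterlim_sequentially_Suc[THEN iffD1])
  let ?f = "\<lambda>m u. ennreal (poisson_lt k (root k (1 / real m) * u) ^ m) * indicator {0..} u"
  show "(\<lambda>n. halfline_integral (\<lambda>u. poisson_lt k (root k (1 / real (Suc n)) * u) ^ Suc n))
          \<longlonglongrightarrow> halfline_integral (\<lambda>u. exp (- (u ^ k) / fact k))"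
    unfolding halfline_integral_def
  proof (rule nn_integral_dominated_convergence[where w = "\<lambda>u. ennreal (poisson_lt k u) * indicator {0..} u"])
    show "(\<integral>\<^sup>+u. ennreal (poisson_lt k u) * indicator {0..} u \<partial>lborel) < \<infinity>"
      using halfline_integral_poisson_lt[of k] by (simp add: halfline_integral_def)
    show "AE u in lborel. ?f (Suc n) u \<le> ennreal (poisson_lt k u) * indicator {0..} u" for n
      using prod_poisson_lt_le_poisson_lt[of "{1..Suc n}" "\<lambda>_. root k (1 / real (Suc n))" k] assms
      by (intro AE_I2) (auto simp: indicator_def ennreal_leI)
    show "AE u in lborel. (\<lambda>n. ?f (Suc n) u) \<longlonglongrightarrow> ennreal (exp (- (u ^ k) / fact k)) * indicator {0..} u"
    proof (rule AE_I2)
      fix u :: real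
      show "(\<lambda>n. ?f (Suc n) u) \<longlonglongrightarrow> ennreal (exp (- (u ^ k) / fact k)) * indicator {0..} u"
      proof (cases "u \<ge> 0")
        case True
        then show ?thesis
          using tendsto_ennrealI[OF LIMSEQ_Suc[OF tendsto_poisson_lt_uniform[OF assms True]]]
          by simp
      qed simp
    qed
  qed measurable
qed

lemma tendsto_lp_norm_mult_expected_hit_time_uniform:
  assumes "k \<ge> 1"
  shows "(\<lambda>m. lp_norm k m (pmf_of_set {1..m}) * expected_hit_time k (pmf_of_set {1..m}))
           \<longlonglongrightarrow> fact k powr (1 / real k) * Gamma (1 + 1 / real k)"
proof (rule tendsto_ennrealD)
  let ?V = "\<lambda>m. lp_norm k m (pmf_of_set {1..m}) * expected_hit_time k (pmf_of_set {1..m})"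
  have "eventually (\<lambda>m. ennreal (?V m) =
          halfline_integral (\<lambda>u. poisson_lt k (root k (1 / real m) * u) ^ m)) sequentially"
    using lp_norm_mult_expected_hit_time_uniform assms by (intro eventually_sequentiallyI) auto
  from tendsto_cong[OF this] show "(\<lambda>m. ennreal (?V m)) \<longlonglongrightarrow> ennreal (fact k powr (1 / real k) * Gamma (1 + 1 / real k))"
    using tendsto_halfline_integral_poisson_lt_uniform halfline_integral_exp_neg_pow_div_fact assms
    by simp
  have "?V m \<ge> 0" if "m \<ge> 1" for m
    using lp_norm_pos[of k "pmf_of_set {1..m}" m] expected_hit_time_nonneg[of "pmf_of_set {1..m}" k]
      assms that by simp
  then show "eventually (\<lambda>m. ?V m \<ge> 0) sequentially"
    by (rule eventually_sequentiallyI)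
  show "fact k powr (1 / real k) * Gamma (1 + 1 / real k) \<ge> 0"
    by (intro mult_nonneg_nonneg less_imp_le Gamma_real_pos) (auto intro: add_pos_nonneg)
qed

theorem proposition13:
  fixes k :: nat
  assumes "k \<ge> 2"
  defines "c \<equiv> fact k powr (1 / real k) * Gamma (1 + 1 / real k)"
  shows "((\<lambda>t::real. exp (- (t ^ k) / fact k)) has_integral c) {0..} \<and>
         (\<forall>m p. m \<ge> 1 \<and> set_pmf p \<subseteq> {1..m} \<longrightarrow>
           c \<le> lp_norm k m p * expected_hit_time k p) \<and>
         Inf (admissible_values k) = c \<and>
         (\<forall>m p. m \<ge> 1 \<and> set_pmf p \<subseteq> {1..m} \<longrightarrow>
           lp_norm k m p * expected_hit_time k p \<le> real k) \<and>
         Sup (admissible_values k) = real k"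
proof -
  have k: "k \<ge> 1" using assms by simp
  let ?V = "\<lambda>m. lp_norm k m (pmf_of_set {1..m}) * expected_hit_time k (pmf_of_set {1..m})"
  have uniform: "?V m \<in> admissible_values k" if "m \<ge> 1" for m
    unfolding admissible_values_def using that by force
  have single_bin: "real k \<in> admissible_values k"
    unfolding admissible_values_def
    using lp_norm_mult_expected_hit_time_single_bin[OF k, symmetric] by force
  have "Inf (admissible_values k) = c"
  proof (rule cInf_eq_non_empty)
    show "admissible_values k \<noteq> {}" using single_bin by blast
    show "c \<le> x" if "x \<in> admissible_values k" for x
      using that lp_norm_mult_expected_hit_time_ge[OF k]
      unfolding admissible_values_def c_def by blast
    show "y \<le> c" if "\<And>x. x \<in> admissible_values k \<Longrightarrow> y \<le> x" for y
      using tendsto_lp_norm_mult_expected_hit_time_uniform[OF k] that uniform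
      unfolding c_def by (intro LIMSEQ_le_const) auto
  qed
  moreover have "Sup (admissible_values k) = real k"
    using single_bin lp_norm_mult_expected_hit_time_le[OF k]
    unfolding admissible_values_def by (intro cSup_eq_maximum) blast+
  ultimately show ?thesis
    using has_integral_exp_neg_pow_div_fact[OF k] lp_norm_mult_expected_hit_time_ge[OF k]
      lp_norm_mult_expected_hit_time_le[OF k]
    unfolding c_def by blast
qed

end
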